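(* Let $n$ be sufficiently large, let $k \ge 4\log_2 n + 2$ be an integer, and let $T_k$ be any tournament on $k$ vertices. Then OBreaker has a winning strategy in the orientation game $Or(T_k,n)$.
   Context: A tournament is a directed graph in which every pair of distinct vertices is joined by exactly one directed edge. The orientation game $Or(T_k,n)$ is played on the edge set of $K_n$ by two players, OMaker and OBreaker. OMaker moves first, and the players then alternate. In each move the player chooses one previously undirected edge of $K_n$ and gives it a direction. The game ends when all edges are directed. OMaker wins if the final digraph, which contains the edges directed by both players, contains a copy of $T_k$; otherwise OBreaker wins. *)

theory Defs
  imports Complex_Main
begin

definition is_tournament :: "nat \<Rightarrow> (nat \<times> nat) set \<Rightarrow> bool" where
  "is_tournament k T \<longleftrightarrow>
     T \<subseteq> {0..<k} \<times> {0..<k} \<and>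
     (\<forall>i\<in>{0..<k}. (i, i) \<notin> T) \<and>
     (\<forall>i\<in>{0..<k}. \<forall>j\<in>{0..<k}. i \<noteq> j \<longrightarrow> ((i, j) \<in> T \<longleftrightarrow> (j, i) \<notin> T))"

text \<open>A legal move in the orientation game on K_n (vertices {0..<n}) in position D:
  orient a previously undirected edge {u,v} as the arc (u,v).\<close>
definition legal_move :: "nat \<Rightarrow> (nat \<times> nat) set \<Rightarrow> nat \<times> nat \<Rightarrow> bool" where
  "legal_move n D e \<longleftrightarrow> (case e of (u, v) \<Rightarrow>
     u < n \<and> v < n \<and> u \<noteq> v \<and> (u, v) \<notin> D \<and> (v, u) \<notin> D)"

definition game_over :: "nat \<Rightarrow> (nat \<times> nat) set \<Rightarrow> bool" where
  "game_over n D \<longleftrightarrow> (\<forall>e. \<not> legal_move n D e)"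

definition contains_copy :: "nat \<Rightarrow> (nat \<times> nat) set \<Rightarrow> nat \<Rightarrow> (nat \<times> nat) set \<Rightarrow> bool" where
  "contains_copy n D k T \<longleftrightarrow>
     (\<exists>f. inj_on f {0..<k} \<and> f ` {0..<k} \<subseteq> {0..<n} \<and>
          (\<forall>(i, j)\<in>T. (f i, f j) \<in> D))"

text \<open>OBreaker can force a win in Or(T,n) from position D; the boolean says whether
  OMaker is to move.  Least fixed point = OBreaker has a strategy winning in every play.\<close>
inductive breaker_wins_from ::
  "nat \<Rightarrow> nat \<Rightarrow> (nat \<times> nat) set \<Rightarrow> (nat \<times> nat) set \<Rightarrow> bool \<Rightarrow> bool"
  for n k T where
  final: "game_over n D \<Longrightarrow> \<not> contains_copy n D k T \<Longrightarrow> breaker_wins_from n k T D b"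
| maker_turn: "\<not> game_over n D \<Longrightarrow>
      (\<And>e. legal_move n D e \<Longrightarrow> breaker_wins_from n k T (insert e D) False) \<Longrightarrow>
      breaker_wins_from n k T D True"
| breaker_turn: "legal_move n D e \<Longrightarrow> breaker_wins_from n k T (insert e D) True \<Longrightarrow>
      breaker_wins_from n k T D False"

definition breaker_wins :: "nat \<Rightarrow> nat \<Rightarrow> (nat \<times> nat) set \<Rightarrow> bool" where
  "breaker_wins n k T \<longleftrightarrow> breaker_wins_from n k T {} True"

end

theory Submission
  imports Defs "HOL-Library.FuncSet"
begin

text \<open>
  A potential argument of Erdos-Selfridge type.  Every injective placement \<open>f\<close> of \<open>T\<close> in \<open>K\<^sub>n\<close>
  gets weight \<open>\<surd>2 ^ m\<close>, where \<open>m\<close> counts the arcs of \<open>T\<close> already oriented as \<open>f\<close> needs them,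
  or weight 0 once some arc is oriented against \<open>f\<close>; the danger of an undirected edge is the
  total weight of the placements using it.  Breaker orients the most dangerous edge against
  every placement using it.  Then, before each Maker move, the potential plus \<open>(\<surd>2 - 1)\<close> times
  the danger of any free edge is at most the potential before Breaker's last move, so it stays
  below \<open>\<surd>2 ^ |T|\<close>, the weight of a completed copy, as long as it starts below.  It starts below
  \<open>\<surd>2 \<cdot> n ^ k\<close>, and \<open>\<surd>2 \<cdot> n ^ k < \<surd>2 ^ (k(k-1)/2)\<close> when \<open>k \<ge> 4 log\<^sub>2 n + 2\<close>.
\<close>

lemma one_le_sqrt_2: "1 \<le> sqrt 2"
  by simp

lemma sqrt_2_le_2: "sqrt 2 \<le> 2"
  using real_sqrt_le_mono[of 2 4] by simp

lemma legal_move_insertD: "legal_move n (insert e D) e' \<Longrightarrow> legal_move n D e'"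
  unfolding legal_move_def by (cases e') auto

lemma not_legal_move_insert_self: "\<not> legal_move n (insert e D) e"
  unfolding legal_move_def by (cases e) auto

lemma legal_move_swap: "legal_move n D (u, v) \<Longrightarrow> legal_move n D (v, u)"
  unfolding legal_move_def by auto

lemma finite_legal_moves: "finite {e. legal_move n D e}"
  by (rule finite_subset[of _ "{0..<n} \<times> {0..<n}"]) (auto simp: legal_move_def)

lemma card_legal_moves_insert:
  "legal_move n D e \<Longrightarrow> card {e'. legal_move n (insert e D) e'} < card {e'. legal_move n D e'}"
  by (rule psubset_card_mono[OF finite_legal_moves])
     (use legal_move_insertD not_legal_move_insert_self in blast)

lemma asym_insert_legal_move: "asym D \<Longrightarrow> legal_move n D (u, v) \<Longrightarrow> asym (insert (u, v) D)"
  unfolding asym_on_def legal_move_def by auto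

locale oriented_graph_game =
  fixes n k :: nat and T :: "(nat \<times> nat) set"
  assumes arcs_in_range: "T \<subseteq> {0..<k} \<times> {0..<k}"
    and asym_T: "asym T"
begin

definition placements :: "(nat \<Rightarrow> nat) set" where
  "placements = {f \<in> {0..<k} \<rightarrow>\<^sub>E {0..<n}. inj_on f {0..<k}}"

definition uses :: "(nat \<Rightarrow> nat) \<Rightarrow> nat \<times> nat \<Rightarrow> bool" where
  "uses f e \<longleftrightarrow> (\<exists>(i, j)\<in>T. (f i, f j) = e)"

definition unblocked :: "(nat \<times> nat) set \<Rightarrow> (nat \<Rightarrow> nat) \<Rightarrow> bool" where
  "unblocked D f \<longleftrightarrow> (\<forall>(i, j)\<in>T. (f j, f i) \<notin> D)"

definition claimed :: "(nat \<times> nat) set \<Rightarrow> (nat \<Rightarrow> nat) \<Rightarrow> nat" where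
  "claimed D f = card {(i, j) \<in> T. (f i, f j) \<in> D}"

definition weight :: "(nat \<times> nat) set \<Rightarrow> (nat \<Rightarrow> nat) \<Rightarrow> real" where
  "weight D f = (if unblocked D f then sqrt 2 ^ claimed D f else 0)"

definition potential :: "(nat \<times> nat) set \<Rightarrow> real" where
  "potential D = (\<Sum>f\<in>placements. weight D f)"

definition danger :: "(nat \<times> nat) set \<Rightarrow> nat \<times> nat \<Rightarrow> real" where
  "danger D e = (\<Sum>f\<in>placements. if uses f e then weight D f else 0)"

lemma finite_T: "finite T"
  using arcs_in_range finite_subset by blast

lemma finite_placements: "finite placements"
  unfolding placements_def
  by (rule finite_subset[of _ "{0..<k} \<rightarrow>\<^sub>E {0..<n}"]) (auto intro: finite_PiE)

lemma card_placements_le: "card placements \<le> n ^ k"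
proof -
  have "card placements \<le> card ({0..<k} \<rightarrow>\<^sub>E {0..<n})"
    by (rule card_mono) (auto simp: placements_def intro: finite_PiE)
  also have "\<dots> = n ^ k" by (simp add: card_PiE)
  finally show ?thesis .
qed

lemma uses_unique_arc:
  assumes "inj_on f {0..<k}" "(i, j) \<in> T" "(i', j') \<in> T" "(f i', f j') = (f i, f j)"
  shows "(i', j') = (i, j)"
  using assms arcs_in_range unfolding inj_on_def by auto

lemma not_uses_both_directions:
  assumes "inj_on f {0..<k}" "uses f (u, v)"
  shows "\<not> uses f (v, u)"
proof
  assume "uses f (v, u)"
  then obtain i' j' where "(i', j') \<in> T" "f i' = v" "f j' = u" unfolding uses_def by auto
  moreover obtain i j where "(i, j) \<in> T" "f i = u" "f j = v" using assms(2) unfolding uses_def by auto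
  ultimately have "(j', i') = (i, j)" "(i', j') \<in> T"
    using assms(1) arcs_in_range unfolding inj_on_def by auto
  with \<open>(i, j) \<in> T\<close> show False using asymD[OF asym_T] by auto
qed

lemma claimed_insert:
  assumes "legal_move n D (u, v)" "inj_on f {0..<k}"
  shows "claimed (insert (u, v) D) f = claimed D f + (if uses f (u, v) then 1 else 0)"
proof -
  let ?S = "{(i, j) \<in> T. (f i, f j) \<in> D}"
  let ?N = "{(i, j) \<in> T. (f i, f j) = (u, v)}"
  have "{(i, j) \<in> T. (f i, f j) \<in> insert (u, v) D} = ?S \<union> ?N" by auto
  moreover have "?S \<inter> ?N = {}" using assms(1) unfolding legal_move_def by auto
  moreover have "card ?N = (if uses f (u, v) then 1 else 0)"
  proof (cases "uses f (u, v)")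
    case True
    then obtain i j where "(i, j) \<in> T" "(f i, f j) = (u, v)" unfolding uses_def by auto
    then have "?N = {(i, j)}" using uses_unique_arc[OF assms(2)] by auto
    with True show ?thesis by simp
  next
    case False
    then have "?N = {}" unfolding uses_def by auto
    then have "card ?N = 0" by (simp only: card.empty)
    with False show ?thesis by simp
  qed
  moreover have "finite ?S" "finite ?N" using finite_T by (auto intro: finite_subset)
  ultimately show ?thesis
    unfolding claimed_def by (simp only: card_Un_disjoint)
qed

lemma weight_nonneg: "weight D f \<ge> 0"
  unfolding weight_def by simp

lemma weight_insert:
  assumes "legal_move n D (u, v)" "inj_on f {0..<k}"
  shows "weight (insert (u, v) D) f = weight D f
           + (sqrt 2 - 1) * (if uses f (u, v) then weight D f else 0)
           - (if uses f (v, u) then weight D f else 0)"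
proof -
  have "unblocked (insert (u, v) D) f \<longleftrightarrow> unblocked D f \<and> \<not> uses f (v, u)"
    unfolding unblocked_def uses_def by auto
  then show ?thesis
    using claimed_insert[OF assms] not_uses_both_directions[OF assms(2)]
    unfolding weight_def by (auto simp: algebra_simps)
qed

lemma weight_insert_le:
  assumes "legal_move n D (u, v)" "inj_on f {0..<k}"
  shows "weight (insert (u, v) D) f \<le> sqrt 2 * weight D f"
  using weight_insert[OF assms] weight_nonneg[of D f] mult_right_mono[OF one_le_sqrt_2, of "weight D f"]
  by (cases "uses f (u, v)"; cases "uses f (v, u)") (auto simp: algebra_simps)

lemma potential_insert:
  assumes "legal_move n D (u, v)"
  shows "potential (insert (u, v) D) = potential D + (sqrt 2 - 1) * danger D (u, v) - danger D (v, u)"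
proof -
  have "potential (insert (u, v) D) =
          (\<Sum>f\<in>placements. weight D f + (sqrt 2 - 1) * (if uses f (u, v) then weight D f else 0)
                             - (if uses f (v, u) then weight D f else 0))"
    unfolding potential_def
    by (rule sum.cong) (use weight_insert[OF assms] in \<open>auto simp: placements_def\<close>)
  then show ?thesis
    unfolding potential_def danger_def by (simp add: sum.distrib sum_subtractf sum_distrib_left)
qed

lemma danger_insert_le:
  "legal_move n D (u, v) \<Longrightarrow> danger (insert (u, v) D) e \<le> sqrt 2 * danger D e"
  unfolding danger_def sum_distrib_left
  by (rule sum_mono) (auto simp: placements_def weight_nonneg intro: weight_insert_le)

lemma danger_nonneg: "danger D e \<ge> 0"
  unfolding danger_def by (rule sum_nonneg) (simp add: weight_nonneg)

lemma danger_le_potential: "danger D e \<le> potential D"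
  unfolding danger_def potential_def by (rule sum_mono) (simp add: weight_nonneg)

lemma potential_empty: "potential {} = card placements"
  unfolding potential_def weight_def unblocked_def claimed_def by simp

lemma potential_maker_move:
  "legal_move n D e \<Longrightarrow> potential (insert e D) \<le> potential D + (sqrt 2 - 1) * danger D e"
  using potential_insert danger_nonneg by (cases e) fastforce

lemma potential_ge_if_contains_copy:
  assumes "asym D" "contains_copy n D k T"
  shows "sqrt 2 ^ card T \<le> potential D"
proof -
  obtain f where f: "inj_on f {0..<k}" "f ` {0..<k} \<subseteq> {0..<n}" "\<forall>(i, j)\<in>T. (f i, f j) \<in> D"
    using assms(2) unfolding contains_copy_def by blast
  let ?g = "restrict f {0..<k}"
  have "?g \<in> placements" unfolding placements_def using f by (auto simp: inj_on_def)
  have arcs: "(?g i, ?g j) \<in> D" if "(i, j) \<in> T" for i j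
    using f(3) that arcs_in_range by auto
  then have "unblocked D ?g" unfolding unblocked_def using asymD[OF assms(1)] by blast
  moreover have "{(i, j) \<in> T. (?g i, ?g j) \<in> D} = T" using arcs by blast
  then have "claimed D ?g = card T" unfolding claimed_def by simp
  ultimately have "weight D ?g = sqrt 2 ^ card T" unfolding weight_def by simp
  moreover have "weight D ?g \<le> potential D"
    unfolding potential_def
    by (rule member_le_sum[OF \<open>?g \<in> placements\<close>]) (auto simp: weight_nonneg finite_placements)
  ultimately show ?thesis by simp
qed

lemma breaker_reply:
  assumes "\<not> game_over n D"
  obtains e where "legal_move n D e" "potential (insert e D) \<le> potential D"
    "\<And>e'. legal_move n (insert e D) e' \<Longrightarrow>
       potential (insert e D) + (sqrt 2 - 1) * danger (insert e D) e' \<le> potential D"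
proof -
  let ?L = "{e. legal_move n D e}"
  have "finite (danger D ` ?L)" "danger D ` ?L \<noteq> {}"
    using finite_legal_moves assms unfolding game_over_def by auto
  then have "Max (danger D ` ?L) \<in> danger D ` ?L" by (rule Max_in)
  then obtain u v where uv: "legal_move n D (u, v)" "danger D (u, v) = Max (danger D ` ?L)"
    by auto
  define M where "M = danger D (u, v)"
  have most_dangerous: "danger D e \<le> M" if "legal_move n D e" for e
    unfolding M_def uv(2) using that finite_legal_moves by simp
  have "M \<ge> 0" unfolding M_def by (rule danger_nonneg)
  have legal: "legal_move n D (v, u)" using legal_move_swap[OF uv(1)] .
  let ?D' = "insert (v, u) D"
  have potential_D': "potential ?D' \<le> potential D + (sqrt 2 - 1) * M - M"
    using potential_insert[OF legal] mult_left_mono[OF most_dangerous[OF legal], of "sqrt 2 - 1"]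
    unfolding M_def by simp
  have danger_D': "(sqrt 2 - 1) * danger ?D' e' \<le> (sqrt 2 - 1) * (sqrt 2 * M)"
    if "legal_move n ?D' e'" for e'
  proof (rule mult_left_mono)
    have "danger ?D' e' \<le> sqrt 2 * danger D e'" by (rule danger_insert_le[OF legal])
    also have "\<dots> \<le> sqrt 2 * M" using most_dangerous[OF legal_move_insertD[OF that]] by simp
    finally show "danger ?D' e' \<le> sqrt 2 * M" .
  qed simp
  show ?thesis
  proof (rule that[OF legal])
    have "(sqrt 2 - 1) * M \<le> M"
      using mult_right_mono[OF sqrt_2_le_2 \<open>M \<ge> 0\<close>] by (simp add: algebra_simps)
    with potential_D' show "potential ?D' \<le> potential D" by linarith
  next
    fix e' assume "legal_move n ?D' e'"
    then have "(sqrt 2 - 1) * danger ?D' e' \<le> (sqrt 2 - 1) * (sqrt 2 * M)" by (rule danger_D')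
    \<comment> \<open>since \<open>\<surd>2 \<cdot> \<surd>2 = 2\<close>, Maker's best reply recovers exactly what Breaker's move destroyed\<close>
    moreover have "(sqrt 2 - 1) * M - M + (sqrt 2 - 1) * (sqrt 2 * M) = 0"
      by (simp add: algebra_simps)
    ultimately show "potential ?D' + (sqrt 2 - 1) * danger ?D' e' \<le> potential D"
      using potential_D' by linarith
  qed
qed

lemma breaker_wins_from_potential:
  assumes "asym D"
  shows "(potential D < sqrt 2 ^ card T \<longrightarrow> breaker_wins_from n k T D False) \<and>
         (potential D < sqrt 2 ^ card T \<longrightarrow>
          (\<forall>e. legal_move n D e \<longrightarrow> potential D + (sqrt 2 - 1) * danger D e < sqrt 2 ^ card T) \<longrightarrow>
          breaker_wins_from n k T D True)"
  using assms
proof (induction "card {e. legal_move n D e}" arbitrary: D rule: less_induct)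
  case less
  let ?B = "sqrt 2 ^ card T"
  have IH: "breaker_wins_from n k T (insert e D) b"
    if "legal_move n D e" "asym (insert e D)" "potential (insert e D) < ?B"
      "b \<Longrightarrow> \<forall>e'. legal_move n (insert e D) e' \<longrightarrow>
               potential (insert e D) + (sqrt 2 - 1) * danger (insert e D) e' < ?B"
    for e b
    using less.hyps[OF card_legal_moves_insert[OF that(1)] that(2)] that(3,4) by (cases b) auto
  have final: "breaker_wins_from n k T D b" if "game_over n D" "potential D < ?B" for b
    using breaker_wins_from.final[OF that(1)] potential_ge_if_contains_copy[OF less.prems] that(2) by fastforce
  show ?case
  proof (intro conjI impI)
    assume "potential D < ?B"
    show "breaker_wins_from n k T D False"
    proof (cases "game_over n D")
      case False
      obtain e where e: "legal_move n D e" "potential (insert e D) \<le> potential D"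
        "\<And>e'. legal_move n (insert e D) e' \<Longrightarrow>
           potential (insert e D) + (sqrt 2 - 1) * danger (insert e D) e' \<le> potential D"
        using breaker_reply[OF False] by blast
      have "asym (insert e D)" using asym_insert_legal_move[OF less.prems] e(1) by (cases e) auto
      with e \<open>potential D < ?B\<close> show ?thesis
        by (intro breaker_wins_from.breaker_turn[OF e(1)] IH) fastforce+
    qed (use final \<open>potential D < ?B\<close> in blast)
  next
    assume "potential D < ?B"
      and safe: "\<forall>e. legal_move n D e \<longrightarrow> potential D + (sqrt 2 - 1) * danger D e < ?B"
    show "breaker_wins_from n k T D True"
    proof (cases "game_over n D")
      case False
      show ?thesis
      proof (rule breaker_wins_from.maker_turn[OF False])
        fix e assume "legal_move n D e"
        moreover have "asym (insert e D)"
          using asym_insert_legal_move[OF less.prems] \<open>legal_move n D e\<close> by (cases e) auto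
        moreover have "potential (insert e D) < ?B"
          using potential_maker_move[OF \<open>legal_move n D e\<close>] safe \<open>legal_move n D e\<close> by fastforce
        ultimately show "breaker_wins_from n k T (insert e D) False" by (rule IH) simp
      qed
    qed (use final \<open>potential D < ?B\<close> in blast)
  qed
qed

theorem breaker_wins_if_few_placements:
  assumes "sqrt 2 * real n ^ k < sqrt 2 ^ card T"
  shows "breaker_wins n k T"
proof -
  have "sqrt 2 * potential {} \<le> sqrt 2 * real n ^ k"
    unfolding potential_empty using card_placements_le
    by (intro mult_left_mono) (simp_all flip: of_nat_power)
  moreover have "potential {} + (sqrt 2 - 1) * danger {} e \<le> sqrt 2 * potential {}" for e
    using mult_left_mono[OF danger_le_potential[of "{}" e], of "sqrt 2 - 1"]
    by (simp add: algebra_simps)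
  moreover have "potential {} \<le> sqrt 2 * potential {}"
    using mult_right_mono[OF one_le_sqrt_2, of "potential {}"] potential_empty by simp
  ultimately have "potential {} < sqrt 2 ^ card T"
    "\<forall>e. legal_move n {} e \<longrightarrow> potential {} + (sqrt 2 - 1) * danger {} e < sqrt 2 ^ card T"
    using assms by (smt (verit))+
  moreover have "asym ({} :: (nat \<times> nat) set)" by (simp add: asym_on_def)
  ultimately show ?thesis
    unfolding breaker_wins_def using breaker_wins_from_potential by blast
qed

end

lemma tournament_asym:
  assumes "is_tournament k T"
  shows "asym T"
proof
  fix i j assume ij: "(i, j) \<in> T"
  have range: "T \<subseteq> {0..<k} \<times> {0..<k}" and irrefl: "\<forall>i\<in>{0..<k}. (i, i) \<notin> T"
    and tournament: "\<forall>i\<in>{0..<k}. \<forall>j\<in>{0..<k}. i \<noteq> j \<longrightarrow> ((i, j) \<in> T \<longleftrightarrow> (j, i) \<notin> T)"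
    using assms unfolding is_tournament_def by blast+
  have "i \<in> {0..<k}" "j \<in> {0..<k}" using ij range by blast+
  moreover have "i \<noteq> j" using ij irrefl \<open>i \<in> {0..<k}\<close> by blast
  ultimately show "(j, i) \<notin> T" using ij tournament by blast
qed

lemma card_tournament:
  assumes "is_tournament k T"
  shows "2 * card T = k * (k - 1)"
proof -
  let ?V = "{0..<k}"
  have range: "T \<subseteq> ?V \<times> ?V" and irrefl: "\<forall>i\<in>?V. (i, i) \<notin> T"
    and complete: "\<forall>i\<in>?V. \<forall>j\<in>?V. i \<noteq> j \<longrightarrow> (i, j) \<in> T \<or> (j, i) \<in> T"
    using assms unfolding is_tournament_def by blast+
  have "finite T" using range by (rule finite_subset) simp
  have "T \<union> T\<inverse> \<subseteq> ?V \<times> ?V - Id_on ?V" using range irrefl by auto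
  moreover have "?V \<times> ?V - Id_on ?V \<subseteq> T \<union> T\<inverse>" using complete by auto
  ultimately have arcs_both_ways: "T \<union> T\<inverse> = ?V \<times> ?V - Id_on ?V" by (rule subset_antisym)
  have diagonal: "Id_on ?V = (\<lambda>i. (i, i)) ` ?V" by auto
  have "T \<inter> T\<inverse> = {}"
    using asymD[OF tournament_asym[OF assms]] by auto
  then have "2 * card T = card (T \<union> T\<inverse>)"
    using \<open>finite T\<close> by (simp add: card_Un_disjoint)
  also have "\<dots> = card (?V \<times> ?V) - card (Id_on ?V)"
    unfolding arcs_both_ways by (rule card_Diff_subset) (auto simp: diagonal)
  also have "card (Id_on ?V) = k" unfolding diagonal by (simp add: card_image inj_on_def)
  finally have "2 * card T = k * k - k" by (simp add: card_cartesian_product)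
  then show ?thesis by (simp add: diff_mult_distrib2)
qed

lemma sqrt_2_mult_power_less:
  fixes n k C :: nat
  assumes "n \<ge> 2" "real k \<ge> 4 * log 2 (real n) + 2" "2 * C = k * (k - 1)"
  shows "sqrt 2 * real n ^ k < sqrt 2 ^ C"
proof -
  define L where "L = log 2 (real n)"
  have "L \<ge> 1" unfolding L_def using assms(1) by simp
  have "real k \<ge> 6" using assms(2) \<open>L \<ge> 1\<close> unfolding L_def by linarith
  have "real C = real k * (real k - 1) / 2"
    using arg_cong[OF assms(3), of real] \<open>real k \<ge> 6\<close> by (simp add: of_nat_diff)
  moreover have "real k * (real k - 1) \<ge> real k * (4 * L + 1)"
    using assms(2) unfolding L_def by (intro mult_left_mono) auto
  ultimately have "1 + 2 * real k * L < real C" using \<open>real k \<ge> 6\<close> by (simp add: algebra_simps)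
  have "real n = 2 powr L" unfolding L_def using assms(1) by simp
  have "(sqrt 2 * real n ^ k) ^ 2 = 2 * real n ^ (2 * k)"
    by (simp add: power_mult_distrib power_mult[symmetric] mult.commute)
  also have "\<dots> = 2 powr (1 + 2 * real k * L)"
    by (simp add: \<open>real n = 2 powr L\<close> powr_add powr_realpow[symmetric] powr_powr algebra_simps)
  also have "\<dots> < 2 powr real C" using \<open>1 + 2 * real k * L < real C\<close> by simp
  also have "\<dots> = (sqrt 2 ^ C) ^ 2"
    by (simp add: powr_realpow power_mult[symmetric] mult.commute[of C] power_mult)
  finally show ?thesis by (rule power_less_imp_less_base) simp
qed

theorem theorem3:
  shows "\<exists>N::nat. \<forall>n\<ge>N. \<forall>(k::nat) T.
           real k \<ge> 4 * log 2 (real n) + 2 \<longrightarrow> is_tournament k T \<longrightarrow> breaker_wins n k T"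
proof (intro exI[of _ 2] allI impI)
  fix n k T
  assume "2 \<le> n" "real k \<ge> 4 * log 2 (real n) + 2" and tournament: "is_tournament k T"
  interpret oriented_graph_game n k T
    using tournament tournament_asym by unfold_locales (auto simp: is_tournament_def)
  show "breaker_wins n k T"
    using breaker_wins_if_few_placements sqrt_2_mult_power_less card_tournament tournament \<open>2 \<le> n\<close>
      \<open>real k \<ge> 4 * log 2 (real n) + 2\<close> by blast
qed

end
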